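(* Let $n \geq 0$ be an integer. Then the value $H_0(2a-n, a)$ is the same for all integers $a \geq 2n$.
   Context: For a finite poset, the Hasse diagram is the directed graph on its points whose arcs are the covering pairs $x \to y$ ($x<y$ with no $w$ satisfying $x<w<y$). Posets are counted up to isomorphism (unlabeled). $H_0(p,a)$ is the number of isomorphism classes of posets with $p$ points and exactly $a$ arcs in the Hasse diagram that have no isolated points (an isolated point is a point incident to no arc of the Hasse diagram). By convention the empty poset is counted, so $H_0(0,0) = 1$. *)

theory Defs
  imports Main
begin

definition poset_on :: "nat \<Rightarrow> (nat \<times> nat) set \<Rightarrow> bool" where
  "poset_on p R \<longleftrightarrow> partial_order_on {0..<p} R"

definition hasse :: "(nat \<times> nat) set \<Rightarrow> (nat \<times> nat) set" where
  "hasse R = {(x, y). (x, y) \<in> R \<and> x \<noteq> y \<and>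
      \<not> (\<exists>w. (x, w) \<in> R \<and> (w, y) \<in> R \<and> w \<noteq> x \<and> w \<noteq> y)}"

definition no_isolated :: "nat \<Rightarrow> (nat \<times> nat) set \<Rightarrow> bool" where
  "no_isolated p R \<longleftrightarrow>
     (\<forall>x\<in>{0..<p}. \<exists>y. (x, y) \<in> hasse R \<or> (y, x) \<in> hasse R)"

definition poset_iso :: "nat \<Rightarrow> (nat \<times> nat) set \<Rightarrow> (nat \<times> nat) set \<Rightarrow> bool" where
  "poset_iso p R S \<longleftrightarrow> (\<exists>f. bij_betw f {0..<p} {0..<p} \<and>
     (\<forall>x\<in>{0..<p}. \<forall>y\<in>{0..<p}. (x, y) \<in> R \<longleftrightarrow> (f x, f y) \<in> S))"

definition H0_posets :: "nat \<Rightarrow> nat \<Rightarrow> (nat \<times> nat) set set" where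
  "H0_posets p a = {R. poset_on p R \<and> card (hasse R) = a \<and> no_isolated p R}"

definition H0 :: "nat \<Rightarrow> nat \<Rightarrow> nat" where
  "H0 p a = card (H0_posets p a //
      {(R, S). R \<in> H0_posets p a \<and> S \<in> H0_posets p a \<and> poset_iso p R S})"

end

theory Submission
  imports Defs "HOL-Combinatorics.Transposition"
begin

(* Adjoining a disjoint two-element chain p < p+1 sends posets on p points with a Hasse arcs and
   no isolated points to posets on p+2 points with a+1 arcs and no isolated points, and it is
   injective on isomorphism classes: an isomorphism between two enlarged posets becomes one that
   fixes the adjoined chain after composing with the automorphism that exchanges two isolated
   two-element chains.

   It is onto the isomorphism classes as soon as 3(a+1) < 2(p+2). In a Hasse diagram without
   isolated points, if no arc forms a connected component by itself, then the points of degree 1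
   inject into the arcs and all other points have degree at least 2, so 2 #points <= 3 #arcs.
   Hence some arc is isolated, and an isolated Hasse arc of a finite poset is an isolated
   two-element chain of the poset, which can be relabelled to be the adjoined one.

   For p = 2a - n the step from a to a+1 is such a step, and the inequality reads a >= 2n. *)

section \<open>Transport of relations along bijections\<close>

lemma dir_image_eq_image: "dir_image R f = map_prod f f ` R"
  unfolding dir_image_def by auto

lemma dir_image_id: "dir_image R id = R"
  by (auto simp: dir_image_def)

lemma dir_image_comp: "dir_image (dir_image R f) g = dir_image R (g \<circ> f)"
  by (auto simp: dir_image_def)

lemma dir_image_cong:
  assumes "R \<subseteq> A \<times> A" and "\<And>x. x \<in> A \<Longrightarrow> f x = g x"
  shows "dir_image R f = dir_image R g"
  using assms unfolding dir_image_def by (force simp: subset_iff)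

lemma dir_image_inv_into:
  assumes "inj_on f A" and "R \<subseteq> A \<times> A"
  shows "dir_image (dir_image R f) (inv_into A f) = R"
  using assms by (simp add: dir_image_comp dir_image_cong[of R A _ id] dir_image_id)

lemma card_dir_image:
  assumes "inj_on f A" and "R \<subseteq> A \<times> A"
  shows "card (dir_image R f) = card R"
proof -
  have "inj_on (map_prod f f) R"
    using map_prod_inj_on[OF assms(1) assms(1)] assms(2) inj_on_subset by blast
  then show ?thesis by (simp add: dir_image_eq_image card_image)
qed

lemma hasse_dir_image:
  assumes inj: "inj_on f A" and R: "R \<subseteq> A \<times> A"
  shows "hasse (dir_image R f) = dir_image (hasse R) f"
proof -
  have mem: "(f x, f y) \<in> dir_image R f \<longleftrightarrow> (x, y) \<in> R" if "x \<in> A" "y \<in> A" for x y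
    using that R inj unfolding dir_image_def inj_on_def by blast
  have dom: "\<exists>x\<in>A. \<exists>y\<in>A. u = f x \<and> v = f y" if "(u, v) \<in> dir_image R f" for u v
    using that R unfolding dir_image_def by blast
  have hasse_mem: "(f x, f y) \<in> hasse (dir_image R f) \<longleftrightarrow> (x, y) \<in> hasse R"
    if "x \<in> A" "y \<in> A" for x y
  proof -
    have "(\<exists>w. (f x, w) \<in> dir_image R f \<and> (w, f y) \<in> dir_image R f \<and> w \<noteq> f x \<and> w \<noteq> f y)
      \<longleftrightarrow> (\<exists>z\<in>A. (f x, f z) \<in> dir_image R f \<and> (f z, f y) \<in> dir_image R f \<and> f z \<noteq> f x \<and> f z \<noteq> f y)"
      using dom by blast
    also have "\<dots> \<longleftrightarrow> (\<exists>z. (x, z) \<in> R \<and> (z, y) \<in> R \<and> z \<noteq> x \<and> z \<noteq> y)"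
      using that mem R inj unfolding inj_on_def by blast
    finally show ?thesis
      using that mem inj unfolding hasse_def inj_on_def by auto
  qed
  show ?thesis
  proof (intro set_eqI iffI)
    fix e assume e: "e \<in> hasse (dir_image R f)"
    then obtain x y where "x \<in> A" "y \<in> A" "e = (f x, f y)"
      using dom unfolding hasse_def by blast
    then show "e \<in> dir_image (hasse R) f"
      using e hasse_mem unfolding dir_image_def by blast
  next
    fix e assume "e \<in> dir_image (hasse R) f"
    then obtain x y where "(x, y) \<in> hasse R" "e = (f x, f y)"
      unfolding dir_image_def by blast
    moreover have "x \<in> A" "y \<in> A" using calculation R unfolding hasse_def by auto
    ultimately show "e \<in> hasse (dir_image R f)" using hasse_mem by blast
  qed
qed

lemma poset_on_subset: "poset_on p R \<Longrightarrow> R \<subseteq> {0..<p} \<times> {0..<p}"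
  unfolding poset_on_def partial_order_on_def preorder_on_def by blast

lemma poset_on_iff:
  "poset_on p R \<longleftrightarrow> R \<subseteq> {0..<p} \<times> {0..<p} \<and> (\<forall>x<p. (x, x) \<in> R) \<and>
     (\<forall>x y z. (x, y) \<in> R \<longrightarrow> (y, z) \<in> R \<longrightarrow> (x, z) \<in> R) \<and>
     (\<forall>x y. (x, y) \<in> R \<longrightarrow> (y, x) \<in> R \<longrightarrow> x = y)"
  unfolding poset_on_def partial_order_on_def preorder_on_def refl_on_def trans_def antisym_def
  by auto

lemma poset_on_dir_image:
  assumes f: "bij_betw f {0..<p} {0..<p}" and R: "poset_on p R"
  shows "poset_on p (dir_image R f)"
proof -
  have "Field R = {0..<p}"
    using R unfolding poset_on_def partial_order_on_def preorder_on_def refl_on_def Field_def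
    by auto
  then show ?thesis
    using assms Partial_order_dir_image[of R f] dir_image_Field[of R f]
    unfolding poset_on_def bij_betw_def by simp
qed

lemma no_isolated_dir_image:
  assumes f: "bij_betw f {0..<p} {0..<p}" and R: "R \<subseteq> {0..<p} \<times> {0..<p}"
    and "no_isolated p R"
  shows "no_isolated p (dir_image R f)"
  unfolding no_isolated_def hasse_dir_image[OF bij_betw_imp_inj_on[OF f] R]
proof
  fix x assume "x \<in> {0..<p}"
  then obtain z where "z \<in> {0..<p}" "x = f z"
    using f by (metis bij_betw_imp_surj_on imageE)
  then obtain y where "(z, y) \<in> hasse R \<or> (y, z) \<in> hasse R"
    using \<open>no_isolated p R\<close> unfolding no_isolated_def by blast
  then show "\<exists>y. (x, y) \<in> dir_image (hasse R) f \<or> (y, x) \<in> dir_image (hasse R) f"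
    using \<open>x = f z\<close> unfolding dir_image_def by blast
qed

lemma H0_posets_dir_image:
  assumes f: "bij_betw f {0..<p} {0..<p}" and R: "R \<in> H0_posets p a"
  shows "dir_image R f \<in> H0_posets p a"
proof -
  have sub: "R \<subseteq> {0..<p} \<times> {0..<p}" using R poset_on_subset unfolding H0_posets_def by blast
  moreover have "hasse R \<subseteq> {0..<p} \<times> {0..<p}" using sub unfolding hasse_def by blast
  ultimately show ?thesis
    using R poset_on_dir_image[OF f] no_isolated_dir_image[OF f sub]
      hasse_dir_image[OF bij_betw_imp_inj_on[OF f] sub] card_dir_image[OF bij_betw_imp_inj_on[OF f]]
    unfolding H0_posets_def by auto
qed

lemma poset_iso_iff_dir_image:
  assumes R: "R \<subseteq> {0..<p} \<times> {0..<p}" and S: "S \<subseteq> {0..<p} \<times> {0..<p}"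
  shows "poset_iso p R S \<longleftrightarrow> (\<exists>f. bij_betw f {0..<p} {0..<p} \<and> S = dir_image R f)"
proof -
  have "(\<forall>x\<in>{0..<p}. \<forall>y\<in>{0..<p}. (x, y) \<in> R \<longleftrightarrow> (f x, f y) \<in> S) \<longleftrightarrow> S = dir_image R f"
    if f: "bij_betw f {0..<p} {0..<p}" for f
  proof
    assume iff: "\<forall>x\<in>{0..<p}. \<forall>y\<in>{0..<p}. (x, y) \<in> R \<longleftrightarrow> (f x, f y) \<in> S"
    show "S = dir_image R f"
    proof
      show "S \<subseteq> dir_image R f"
      proof (rule subrelI)
        fix u v assume uv: "(u, v) \<in> S"
        then have "u \<in> f ` {0..<p}" "v \<in> f ` {0..<p}"
          using S bij_betw_imp_surj_on[OF f] by auto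
        then obtain x y where "x \<in> {0..<p}" "y \<in> {0..<p}" "u = f x" "v = f y"
          by blast
        then show "(u, v) \<in> dir_image R f" using iff uv unfolding dir_image_def by blast
      qed
      show "dir_image R f \<subseteq> S" using iff R unfolding dir_image_def by blast
    qed
  next
    assume "S = dir_image R f"
    then show "\<forall>x\<in>{0..<p}. \<forall>y\<in>{0..<p}. (x, y) \<in> R \<longleftrightarrow> (f x, f y) \<in> S"
      using R bij_betw_imp_inj_on[OF f] unfolding dir_image_def inj_on_def by blast
  qed
  then show ?thesis unfolding poset_iso_def by blast
qed

lemma poset_iso_refl: "poset_iso p R R"
  unfolding poset_iso_def by (rule exI[of _ id]) simp

lemma poset_iso_sym:
  assumes "R \<subseteq> {0..<p} \<times> {0..<p}" and "S \<subseteq> {0..<p} \<times> {0..<p}" and "poset_iso p R S"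
  shows "poset_iso p S R"
proof -
  obtain f where f: "bij_betw f {0..<p} {0..<p}" and "S = dir_image R f"
    using assms(3) poset_iso_iff_dir_image[OF assms(1,2)] by blast
  then have "R = dir_image S (inv_into {0..<p} f)"
    using dir_image_inv_into[OF bij_betw_imp_inj_on[OF f] assms(1)] by simp
  then show ?thesis
    using poset_iso_iff_dir_image[OF assms(2,1)] bij_betw_inv_into[OF f] by blast
qed

lemma poset_iso_trans:
  assumes "R \<subseteq> {0..<p} \<times> {0..<p}" and "S \<subseteq> {0..<p} \<times> {0..<p}" and "T \<subseteq> {0..<p} \<times> {0..<p}"
    and "poset_iso p R S" and "poset_iso p S T"
  shows "poset_iso p R T"
proof -
  obtain f where f: "bij_betw f {0..<p} {0..<p}" and "S = dir_image R f"
    using assms(4) poset_iso_iff_dir_image[OF assms(1,2)] by blast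
  moreover obtain g where g: "bij_betw g {0..<p} {0..<p}" and "T = dir_image S g"
    using assms(5) poset_iso_iff_dir_image[OF assms(2,3)] by blast
  ultimately have "T = dir_image R (g \<circ> f)" by (simp add: dir_image_comp)
  then show ?thesis
    using poset_iso_iff_dir_image[OF assms(1,3)] bij_betw_trans[OF f g] by blast
qed

lemma equiv_poset_iso:
  assumes "\<And>R. R \<in> A \<Longrightarrow> R \<subseteq> {0..<p} \<times> {0..<p}"
  shows "equiv A {(R, S). R \<in> A \<and> S \<in> A \<and> poset_iso p R S}"
proof (rule equivI)
  show "refl_on A {(R, S). R \<in> A \<and> S \<in> A \<and> poset_iso p R S}"
    using poset_iso_refl by (simp add: refl_on_def)
  show "sym {(R, S). R \<in> A \<and> S \<in> A \<and> poset_iso p R S}"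
    using poset_iso_sym[OF assms assms] by (simp add: sym_def)
  show "trans {(R, S). R \<in> A \<and> S \<in> A \<and> poset_iso p R S}"
    using poset_iso_trans[OF assms assms assms] unfolding trans_def by blast
qed auto

section \<open>Isolated two-element chains\<close>

definition isolated_chain :: "('a \<times> 'a) set \<Rightarrow> 'a \<Rightarrow> 'a \<Rightarrow> bool" where
  "isolated_chain R x y \<longleftrightarrow> x \<noteq> y \<and>
     (\<forall>u v. u \<in> {x, y} \<or> v \<in> {x, y} \<longrightarrow> ((u, v) \<in> R \<longleftrightarrow> (u, v) \<in> {(x, x), (x, y), (y, y)}))"

lemma isolated_chain_dir_image:
  assumes "inj_on f A" and "R \<subseteq> A \<times> A" and "x \<in> A" "y \<in> A"
    and "isolated_chain R x y"
  shows "isolated_chain (dir_image R f) (f x) (f y)"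
  using assms unfolding isolated_chain_def dir_image_def inj_on_def
  by (smt (verit) Pair_inject SigmaE insert_iff mem_Collect_eq singletonD subset_iff)

lemma isolated_chains_eq_or_disjoint:
  assumes "isolated_chain R x y" and "isolated_chain R x' y'"
  shows "(x', y') = (x, y) \<or> {x', y'} \<inter> {x, y} = {}"
  using assms unfolding isolated_chain_def by blast

lemma dir_image_transpose_isolated_chains:
  assumes xy: "isolated_chain R x y" and xy': "isolated_chain R x' y'"
  shows "dir_image R (transpose x x' \<circ> transpose y y') = R"
proof (cases "(x', y') = (x, y)")
  case True
  then show ?thesis by (simp add: dir_image_id)
next
  case False
  define \<tau> where "\<tau> = transpose x x' \<circ> transpose y y'"
  have "{x', y'} \<inter> {x, y} = {}" "x \<noteq> y" "x' \<noteq> y'"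
    using False isolated_chains_eq_or_disjoint[OF xy xy'] xy xy' unfolding isolated_chain_def by auto
  then have \<tau>: "\<tau> x = x'" "\<tau> y = y'" "\<tau> x' = x" "\<tau> y' = y"
    "\<And>z. z \<notin> {x, y, x', y'} \<Longrightarrow> \<tau> z = z" "\<And>z. \<tau> (\<tau> z) = z"
    unfolding \<tau>_def by (auto simp: transpose_def)
  have chains: "{(x, x), (x, y), (y, y)} \<subseteq> R" "{(x', x'), (x', y'), (y', y')} \<subseteq> R"
    using xy xy' unfolding isolated_chain_def by auto
  have closed: "(\<tau> u, \<tau> v) \<in> R" if "(u, v) \<in> R" for u v
  proof (cases "u \<in> {x, y, x', y'} \<or> v \<in> {x, y, x', y'}")
    case True
    then have "(u, v) \<in> {(x, x), (x, y), (y, y)} \<or> (u, v) \<in> {(x', x'), (x', y'), (y', y')}"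
      using that xy xy' unfolding isolated_chain_def by blast
    then show ?thesis using chains \<tau>(1-4) by auto
  next
    case False
    then show ?thesis using that \<tau>(5) by simp
  qed
  have "R \<subseteq> dir_image R \<tau>"
  proof (rule subrelI)
    fix u v assume "(u, v) \<in> R"
    then have "(\<tau> u, \<tau> v) \<in> R" by (rule closed)
    moreover have "(u, v) = (\<tau> (\<tau> u), \<tau> (\<tau> v))" using \<tau>(6) by simp
    ultimately show "(u, v) \<in> dir_image R \<tau>" unfolding dir_image_def by blast
  qed
  moreover have "dir_image R \<tau> \<subseteq> R" unfolding dir_image_def using closed by blast
  ultimately show ?thesis unfolding \<tau>_def by blast
qed

section \<open>Adjoining a two-element chain\<close>

definition add_chain :: "nat \<Rightarrow> (nat \<times> nat) set \<Rightarrow> (nat \<times> nat) set" where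
  "add_chain p R = R \<union> {(p, p), (p, Suc p), (Suc p, Suc p)}"

lemma add_chain_subset:
  "R \<subseteq> {0..<p} \<times> {0..<p} \<Longrightarrow> add_chain p R \<subseteq> {0..<Suc (Suc p)} \<times> {0..<Suc (Suc p)}"
  unfolding add_chain_def by auto

lemma add_chain_inject:
  assumes "R \<subseteq> {0..<p} \<times> {0..<p}" and "S \<subseteq> {0..<p} \<times> {0..<p}"
    and "add_chain p R = add_chain p S"
  shows "R = S"
proof -
  have "R = add_chain p R \<inter> {0..<p} \<times> {0..<p}" "S = add_chain p S \<inter> {0..<p} \<times> {0..<p}"
    using assms(1,2) unfolding add_chain_def by auto
  then show ?thesis using assms(3) by simp
qed

lemma dir_image_add_chain:
  assumes "f p = p" and "f (Suc p) = Suc p"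
  shows "dir_image (add_chain p R) f = add_chain p (dir_image R f)"
  using assms unfolding add_chain_def dir_image_eq_image by simp

lemma isolated_chain_add_chain:
  assumes "R \<subseteq> {0..<p} \<times> {0..<p}"
  shows "isolated_chain (add_chain p R) p (Suc p)"
  using assms unfolding isolated_chain_def add_chain_def by auto

lemma hasse_add_chain:
  assumes "R \<subseteq> {0..<p} \<times> {0..<p}"
  shows "hasse (add_chain p R) = insert (p, Suc p) (hasse R)"
  using assms unfolding hasse_def add_chain_def by (auto 0 3)

lemma poset_on_add_chain_iff:
  assumes R: "R \<subseteq> {0..<p} \<times> {0..<p}"
  shows "poset_on (Suc (Suc p)) (add_chain p R) \<longleftrightarrow> poset_on p R"
proof -
  have mem: "(x, y) \<in> add_chain p R \<longleftrightarrow> (x, y) \<in> R \<or> p \<le> x \<and> x \<le> y \<and> y \<le> Suc p" for x y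
    using R unfolding add_chain_def by auto
  have below: "x < p \<and> y < p" if "(x, y) \<in> R" for x y using R that by auto
  have "(\<forall>x<Suc (Suc p). (x, x) \<in> add_chain p R) \<longleftrightarrow> (\<forall>x<p. (x, x) \<in> R)"
    unfolding mem by (auto simp: less_Suc_eq)
  moreover have "(\<forall>x y z. (x, y) \<in> add_chain p R \<longrightarrow> (y, z) \<in> add_chain p R \<longrightarrow> (x, z) \<in> add_chain p R)
    \<longleftrightarrow> (\<forall>x y z. (x, y) \<in> R \<longrightarrow> (y, z) \<in> R \<longrightarrow> (x, z) \<in> R)"
    unfolding mem using below by (smt (verit, best) le_trans not_le)
  moreover have "(\<forall>x y. (x, y) \<in> add_chain p R \<longrightarrow> (y, x) \<in> add_chain p R \<longrightarrow> x = y)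
    \<longleftrightarrow> (\<forall>x y. (x, y) \<in> R \<longrightarrow> (y, x) \<in> R \<longrightarrow> x = y)"
    unfolding mem using below by (meson le_antisym not_le)
  ultimately show ?thesis using R add_chain_subset[OF R] unfolding poset_on_iff by blast
qed

lemma add_chain_mem_H0_posets_iff:
  assumes "R \<subseteq> {0..<p} \<times> {0..<p}"
  shows "add_chain p R \<in> H0_posets (Suc (Suc p)) (Suc a) \<longleftrightarrow> R \<in> H0_posets p a"
proof -
  have "finite (hasse R)" "(p, Suc p) \<notin> hasse R"
    using assms finite_subset[of "hasse R" "{0..<p} \<times> {0..<p}"] unfolding hasse_def by auto
  then have "card (hasse (add_chain p R)) = Suc (card (hasse R))"
    by (simp add: hasse_add_chain[OF assms])
  moreover have "no_isolated (Suc (Suc p)) (add_chain p R) \<longleftrightarrow> no_isolated p R"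
    using assms unfolding no_isolated_def hasse_add_chain[OF assms] by (auto simp: less_Suc_eq)
  ultimately show ?thesis
    unfolding H0_posets_def using poset_on_add_chain_iff[OF assms] by auto
qed

lemma poset_iso_add_chain:
  assumes R: "R \<subseteq> {0..<p} \<times> {0..<p}" and S: "S \<subseteq> {0..<p} \<times> {0..<p}"
    and "poset_iso p R S"
  shows "poset_iso (Suc (Suc p)) (add_chain p R) (add_chain p S)"
proof -
  obtain f where f: "bij_betw f {0..<p} {0..<p}" and fS: "S = dir_image R f"
    using assms(3) poset_iso_iff_dir_image[OF R S] by blast
  have W: "{0..<Suc (Suc p)} = {0..<p} \<union> {p, Suc p}" by auto
  define g where "g z = (if z \<in> {0..<p} then f z else z)" for z
  have "bij_betw g {0..<Suc (Suc p)} {0..<Suc (Suc p)}"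
    unfolding W g_def by (rule bij_betw_disjoint_Un[OF f]) (auto simp: bij_betw_def)
  moreover have "add_chain p S = dir_image (add_chain p R) g"
    using dir_image_add_chain[of g p R] dir_image_cong[OF R, of g f] fS unfolding g_def by simp
  ultimately show ?thesis
    using poset_iso_iff_dir_image[OF add_chain_subset[OF R] add_chain_subset[OF S]] by blast
qed

lemma poset_iso_add_chain_cancel:
  assumes R: "R \<subseteq> {0..<p} \<times> {0..<p}" and S: "S \<subseteq> {0..<p} \<times> {0..<p}"
    and "poset_iso (Suc (Suc p)) (add_chain p R) (add_chain p S)"
  shows "poset_iso p R S"
proof -
  obtain f where f: "bij_betw f {0..<Suc (Suc p)} {0..<Suc (Suc p)}"
    and fS: "add_chain p S = dir_image (add_chain p R) f"
    using assms(3) poset_iso_iff_dir_image[OF add_chain_subset[OF R] add_chain_subset[OF S]] by blast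
  have fchain: "isolated_chain (add_chain p S) (f p) (f (Suc p))"
    using isolated_chain_dir_image[OF bij_betw_imp_inj_on[OF f] add_chain_subset[OF R] _ _
        isolated_chain_add_chain[OF R]] fS by simp
  define \<tau> where "\<tau> = transpose (f p) p \<circ> transpose (f (Suc p)) (Suc p)"
  have \<tau>: "dir_image (add_chain p S) \<tau> = add_chain p S"
    unfolding \<tau>_def
    by (rule dir_image_transpose_isolated_chains) (fact, rule isolated_chain_add_chain[OF S])
  have "f p \<noteq> f (Suc p)" using fchain unfolding isolated_chain_def by simp
  then have \<tau>_chain: "\<tau> (f p) = p \<and> \<tau> (f (Suc p)) = Suc p"
    using isolated_chains_eq_or_disjoint[OF isolated_chain_add_chain[OF S] fchain]
    unfolding \<tau>_def by (elim disjE) (simp_all add: transpose_def)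
  have "f p \<in> {0..<Suc (Suc p)}" "f (Suc p) \<in> {0..<Suc (Suc p)}"
    using f by (auto dest: bij_betwE)
  then have \<tau>_bij: "bij_betw \<tau> {0..<Suc (Suc p)} {0..<Suc (Suc p)}"
    unfolding \<tau>_def by (intro bij_betw_trans[where B = "{0..<Suc (Suc p)}"]) auto
  define g where "g = \<tau> \<circ> f"
  have g: "bij_betw g {0..<Suc (Suc p)} {0..<Suc (Suc p)}" "g p = p" "g (Suc p) = Suc p"
    unfolding g_def using bij_betw_trans[OF f \<tau>_bij] \<tau>_chain by auto
  have "add_chain p S = dir_image (add_chain p R) g"
    using \<tau> fS unfolding g_def by (metis dir_image_comp)
  also have "\<dots> = add_chain p (dir_image R g)"
    using g by (simp add: dir_image_add_chain)
  finally have "add_chain p S = add_chain p (dir_image R g)" .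
  moreover have "{0..<Suc (Suc p)} - {p, Suc p} = {0..<p}" by auto
  then have g_bij: "bij_betw g {0..<p} {0..<p}"
    using bij_betw_DiffI[OF g(1), of "{p, Suc p}" "{p, Suc p}"] g(2,3) by (simp add: bij_betw_def)
  then have "dir_image R g \<subseteq> {0..<p} \<times> {0..<p}"
    using dir_image_subset[OF R, of g] by (simp add: bij_betw_def)
  ultimately have "S = dir_image R g" using add_chain_inject[OF S] by blast
  then show ?thesis using poset_iso_iff_dir_image[OF R S] g_bij by blast
qed

lemma ex_dir_image_add_chain_if_isolated_chain:
  assumes T: "T \<subseteq> {0..<Suc (Suc p)} \<times> {0..<Suc (Suc p)}" and chain: "isolated_chain T x y"
  shows "\<exists>g R. bij_betw g {0..<Suc (Suc p)} {0..<Suc (Suc p)} \<and> R \<subseteq> {0..<p} \<times> {0..<p} \<and>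
    T = dir_image (add_chain p R) g"
proof -
  let ?W = "{0..<Suc (Suc p)}" and ?V = "{0..<p}"
  have "x \<noteq> y" "(x, y) \<in> T" using chain unfolding isolated_chain_def by auto
  then have xy: "x \<noteq> y" "x \<in> ?W" "y \<in> ?W" using T by auto
  then have "card (?W - {x, y}) = card ?V" by (simp add: card_Diff_subset)
  then obtain h where h: "bij_betw h ?V (?W - {x, y})"
    using finite_same_card_bij[of ?V "?W - {x, y}"] by auto
  define g where "g u = (if u \<in> ?V then h u else if u = p then x else y)" for u
  have "bij_betw g (?V \<union> {p, Suc p}) ((?W - {x, y}) \<union> {x, y})"
    unfolding g_def using xy(1) by (intro bij_betw_disjoint_Un[OF h]) (auto simp: bij_betw_def)
  moreover have "?V \<union> {p, Suc p} = ?W" "(?W - {x, y}) \<union> {x, y} = ?W" using xy by auto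
  ultimately have g: "bij_betw g ?W ?W" by simp
  define R where "R = {(u, v). u < p \<and> v < p \<and> (g u, g v) \<in> T}"
  have "dir_image R g = T \<inter> (?W - {x, y}) \<times> (?W - {x, y})"
  proof
    show "dir_image R g \<subseteq> T \<inter> (?W - {x, y}) \<times> (?W - {x, y})"
      unfolding R_def dir_image_def g_def using bij_betwE[OF h] by auto
  next
    show "T \<inter> (?W - {x, y}) \<times> (?W - {x, y}) \<subseteq> dir_image R g"
    proof (rule subrelI)
      fix a b assume ab: "(a, b) \<in> T \<inter> (?W - {x, y}) \<times> (?W - {x, y})"
      then obtain u v where "u \<in> ?V" "v \<in> ?V" "a = h u" "b = h v"
        using bij_betw_imp_surj_on[OF h] by (metis (no_types, lifting) IntD2 imageE mem_Sigma_iff)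
      then show "(a, b) \<in> dir_image R g"
        using ab unfolding R_def dir_image_def g_def by auto
    qed
  qed
  moreover have "T = T \<inter> (?W - {x, y}) \<times> (?W - {x, y}) \<union> {(x, x), (x, y), (y, y)}"
    using T chain unfolding isolated_chain_def by blast
  moreover have "dir_image (add_chain p R) g = dir_image R g \<union> {(x, x), (x, y), (y, y)}"
    unfolding add_chain_def dir_image_eq_image g_def by simp
  moreover have "R \<subseteq> ?V \<times> ?V" unfolding R_def by auto
  ultimately show ?thesis using g by metis
qed

section \<open>Isolated arcs of Hasse diagrams\<close>

lemma hasse_cover_above:
  assumes T: "poset_on q T" and "(x, z) \<in> T" and "x \<noteq> z"
  shows "\<exists>w. (x, w) \<in> hasse T \<and> (w, z) \<in> T"
proof -
  have po: "partial_order_on {0..<q} T" using T unfolding poset_on_def .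
  have "finite T" using poset_on_subset[OF T] finite_subset by blast
  then have "wf (T - Id)" using partial_order_on_well_order_on po by blast
  moreover have "z \<in> {w. (x, w) \<in> T \<and> w \<noteq> x \<and> (w, z) \<in> T}"
    using assms po unfolding partial_order_on_def preorder_on_def refl_on_def by blast
  ultimately obtain w where w: "(x, w) \<in> T" "w \<noteq> x" "(w, z) \<in> T"
    and min: "\<And>u. (u, w) \<in> T - Id \<Longrightarrow> \<not> ((x, u) \<in> T \<and> u \<noteq> x \<and> (u, z) \<in> T)"
    by (rule wfE_min) blast
  have "trans T" using po unfolding partial_order_on_def preorder_on_def by blast
  then have "(x, w) \<in> hasse T"
    using w min unfolding hasse_def trans_def by blast
  then show ?thesis using w by blast
qed

lemma poset_on_converse: "poset_on q (T\<inverse>) \<longleftrightarrow> poset_on q T"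
  unfolding poset_on_def by simp

lemma hasse_converse: "hasse (T\<inverse>) = (hasse T)\<inverse>"
  unfolding hasse_def by auto

lemma hasse_cover_below:
  assumes "poset_on q T" and "(z, x) \<in> T" and "x \<noteq> z"
  shows "\<exists>w. (w, x) \<in> hasse T \<and> (z, w) \<in> T"
  using hasse_cover_above[of q "T\<inverse>" x z] assms by (simp add: poset_on_converse hasse_converse)

definition isolated_arc :: "('a \<times> 'a) set \<Rightarrow> 'a \<Rightarrow> 'a \<Rightarrow> bool" where
  "isolated_arc H x y \<longleftrightarrow>
     (x, y) \<in> H \<and> (\<forall>u v. (u, v) \<in> H \<and> {u, v} \<inter> {x, y} \<noteq> {} \<longrightarrow> (u, v) = (x, y))"

lemma isolated_arc_comparable:
  assumes T: "poset_on q T" and arc: "isolated_arc (hasse T) x y"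
    and uv: "(u, v) \<in> T" "u \<noteq> v" and "u \<in> {x, y} \<or> v \<in> {x, y}"
  shows "(u, v) = (x, y)"
proof -
  have only: "\<And>u v. (u, v) \<in> hasse T \<Longrightarrow> {u, v} \<inter> {x, y} \<noteq> {} \<Longrightarrow> u = x \<and> v = y"
    and "x \<noteq> y"
    using arc unfolding isolated_arc_def hasse_def by blast+
  from assms(5) show ?thesis
  proof
    assume "u \<in> {x, y}"
    obtain w where "(u, w) \<in> hasse T" and wv: "(w, v) \<in> T"
      using hasse_cover_above[OF T uv] by blast
    then have "u = x" "w = y" using only[of u w] \<open>u \<in> {x, y}\<close> by blast+
    moreover have "v = y"
    proof (rule ccontr)
      assume "v \<noteq> y"
      then obtain w' where "(y, w') \<in> hasse T"
        using hasse_cover_above[OF T, of y v] wv \<open>w = y\<close> by blast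
      then show False using only \<open>x \<noteq> y\<close> by blast
    qed
    ultimately show ?thesis by simp
  next
    assume "v \<in> {x, y}"
    obtain w where "(w, v) \<in> hasse T" and uw: "(u, w) \<in> T"
      using hasse_cover_below[OF T uv(1)] uv(2) by blast
    then have "w = x" "v = y" using only[of w v] \<open>v \<in> {x, y}\<close> by blast+
    moreover have "u = x"
    proof (rule ccontr)
      assume "u \<noteq> x"
      then obtain w' where "(w', x) \<in> hasse T"
        using hasse_cover_below[OF T, of u x] uw \<open>w = x\<close> by blast
      then show False using only \<open>x \<noteq> y\<close> by blast
    qed
    ultimately show ?thesis by simp
  qed
qed

lemma isolated_chain_if_isolated_arc:
  assumes T: "poset_on q T" and arc: "isolated_arc (hasse T) x y"
  shows "isolated_chain T x y"
  unfolding isolated_chain_def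
proof (intro conjI allI impI)
  have xy: "(x, y) \<in> T" "x \<noteq> y"
    using arc unfolding isolated_arc_def hasse_def by auto
  then have refl: "(x, x) \<in> T" "(y, y) \<in> T"
    using T unfolding poset_on_iff by auto
  show "x \<noteq> y" by (fact xy(2))
  fix u v assume "u \<in> {x, y} \<or> v \<in> {x, y}"
  then show "(u, v) \<in> T \<longleftrightarrow> (u, v) \<in> {(x, x), (x, y), (y, y)}"
    using refl xy isolated_arc_comparable[OF T arc, of u v] by (cases "u = v") auto
qed

definition incident_arcs :: "('a \<times> 'a) set \<Rightarrow> 'a \<Rightarrow> ('a \<times> 'a) set" where
  "incident_arcs H v = {e\<in>H. v \<in> {fst e, snd e}}"

lemma sum_card_incident_arcs:
  assumes V: "finite V" and H: "H \<subseteq> V \<times> V" and irrefl: "\<forall>(x, y)\<in>H. x \<noteq> y"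
  shows "(\<Sum>v\<in>V. card (incident_arcs H v)) = 2 * card H"
proof -
  have fin: "finite H" using V H finite_subset by blast
  have "(\<Sum>v\<in>V. card (incident_arcs H v)) = (\<Sum>v\<in>V. \<Sum>e\<in>H. if v \<in> {fst e, snd e} then 1 else 0)"
    using fin by (simp add: incident_arcs_def sum.inter_filter[symmetric])
  also have "\<dots> = (\<Sum>e\<in>H. \<Sum>v\<in>V. if v \<in> {fst e, snd e} then 1 else 0)"
    by (rule sum.swap)
  also have "\<dots> = (\<Sum>e\<in>H. card {v\<in>V. v \<in> {fst e, snd e}})"
    using V by (simp add: sum.inter_filter[symmetric])
  also have "\<dots> = (\<Sum>e\<in>H. 2)"
  proof (rule sum.cong)
    fix e assume "e \<in> H"
    then have "{v\<in>V. v \<in> {fst e, snd e}} = {fst e, snd e}" and "fst e \<noteq> snd e"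
      using H irrefl by auto
    then show "card {v\<in>V. v \<in> {fst e, snd e}} = 2" by simp
  qed simp
  finally show ?thesis by simp
qed

lemma card_leaves_le_if_no_isolated_arc:
  assumes fin: "finite H" and irrefl: "\<forall>(x, y)\<in>H. x \<noteq> y" and none: "\<nexists>x y. isolated_arc H x y"
  shows "card {v\<in>V. card (incident_arcs H v) = 1} \<le> card H"
proof -
  let ?L = "{v\<in>V. card (incident_arcs H v) = 1}"
  have "inj_on (\<lambda>v. the_elem (incident_arcs H v)) ?L"
  proof (rule inj_onI, rule ccontr)
    fix v w assume "v \<in> ?L" "w \<in> ?L" "the_elem (incident_arcs H v) = the_elem (incident_arcs H w)"
      and "v \<noteq> w"
    then obtain e where e: "incident_arcs H v = {e}" "incident_arcs H w = {e}"
      by (auto simp: card_1_singleton_iff)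
    then have "e \<in> H" and ends: "{fst e, snd e} = {v, w}"
      using \<open>v \<noteq> w\<close> irrefl unfolding incident_arcs_def by auto
    have "isolated_arc H (fst e) (snd e)"
      unfolding isolated_arc_def
    proof (intro conjI allI impI)
      show "(fst e, snd e) \<in> H" using \<open>e \<in> H\<close> by simp
      fix x y assume "(x, y) \<in> H \<and> {x, y} \<inter> {fst e, snd e} \<noteq> {}"
      then have "(x, y) \<in> incident_arcs H v \<or> (x, y) \<in> incident_arcs H w"
        using ends unfolding incident_arcs_def by auto
      then show "(x, y) = (fst e, snd e)" using e by auto
    qed
    then show False using none by blast
  qed
  moreover have "(\<lambda>v. the_elem (incident_arcs H v)) ` ?L \<subseteq> H"
    unfolding incident_arcs_def by (auto simp: card_1_singleton_iff)
  ultimately show ?thesis using card_inj_on_le fin by blast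
qed

lemma isolated_arc_exists:
  assumes V: "finite V" and H: "H \<subseteq> V \<times> V" and irrefl: "\<forall>(x, y)\<in>H. x \<noteq> y"
    and cover: "\<forall>v\<in>V. \<exists>e\<in>H. v \<in> {fst e, snd e}"
    and sparse: "3 * card H < 2 * card V"
  shows "\<exists>x y. isolated_arc H x y"
proof (rule ccontr)
  assume none: "\<nexists>x y. isolated_arc H x y"
  define L where "L = {v\<in>V. card (incident_arcs H v) = 1}"
  have fin: "finite H" using V H finite_subset by blast
  have "(\<Sum>v\<in>V. 2) \<le> (\<Sum>v\<in>V. card (incident_arcs H v) + (if v \<in> L then 1 else 0))"
  proof (rule sum_mono)
    fix v assume "v \<in> V"
    then obtain e where "e \<in> H" "v \<in> {fst e, snd e}" using cover by blast
    then have "e \<in> incident_arcs H v" unfolding incident_arcs_def by blast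
    moreover have "finite (incident_arcs H v)" using fin unfolding incident_arcs_def by simp
    ultimately have "card (incident_arcs H v) \<noteq> 0" by auto
    then show "2 \<le> card (incident_arcs H v) + (if v \<in> L then 1 else 0)"
      using \<open>v \<in> V\<close> unfolding L_def by auto
  qed
  also have "\<dots> = 2 * card H + card L"
  proof -
    have "{v\<in>V. v \<in> L} = L" unfolding L_def by auto
    then have "(\<Sum>v\<in>V. if v \<in> L then 1 else 0) = card L"
      using V by (simp add: sum.inter_filter[symmetric])
    then show ?thesis
      using sum_card_incident_arcs[OF V H irrefl] by (simp add: sum.distrib)
  qed
  finally show False
    using card_leaves_le_if_no_isolated_arc[OF fin irrefl none, of V] sparse unfolding L_def by simp
qed

section \<open>Counting isomorphism classes\<close>

lemma Image_image_equiv_class: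
  assumes E: "equiv A E" and F: "equiv B F" and "a \<in> A"
    and reflects: "\<And>x y. x \<in> A \<Longrightarrow> y \<in> A \<Longrightarrow> (x, y) \<in> E \<Longrightarrow> (h x, h y) \<in> F"
  shows "F `` (h ` (E `` {a})) = F `` {h a}"
proof
  show "F `` (h ` (E `` {a})) \<subseteq> F `` {h a}"
  proof
    fix b assume "b \<in> F `` (h ` (E `` {a}))"
    then obtain a' where "(a, a') \<in> E" "(h a', b) \<in> F" by blast
    moreover have "a' \<in> A" using calculation(1) equiv_type[OF E] by blast
    ultimately have "(h a, h a') \<in> F" "(h a', b) \<in> F" using reflects \<open>a \<in> A\<close> by blast+
    then show "b \<in> F `` {h a}" using F unfolding equiv_def by (blast dest: transD)
  qed
  show "F `` {h a} \<subseteq> F `` (h ` (E `` {a}))"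
    using equiv_class_self[OF E \<open>a \<in> A\<close>] by blast
qed

lemma card_quotient_eqI:
  assumes E: "equiv A E" and F: "equiv B F" and h: "h ` A \<subseteq> B"
    and reflects: "\<And>x y. x \<in> A \<Longrightarrow> y \<in> A \<Longrightarrow> (x, y) \<in> E \<longleftrightarrow> (h x, h y) \<in> F"
    and onto: "\<And>b. b \<in> B \<Longrightarrow> \<exists>a\<in>A. (h a, b) \<in> F"
  shows "card (A // E) = card (B // F)"
proof -
  define \<Phi> where "\<Phi> X = F `` (h ` X)" for X
  have class_image: "\<Phi> (E `` {a}) = F `` {h a}" if "a \<in> A" for a
    unfolding \<Phi>_def using Image_image_equiv_class[OF E F that] reflects by blast
  have "inj_on \<Phi> (A // E)"
  proof (rule inj_onI)
    fix X Y assume X: "X \<in> A // E" and Y: "Y \<in> A // E" and "\<Phi> X = \<Phi> Y"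
    obtain a where a: "a \<in> A" "X = E `` {a}" using X by (rule quotientE)
    obtain b where b: "b \<in> A" "Y = E `` {b}" using Y by (rule quotientE)
    have "F `` {h a} = F `` {h b}" using \<open>\<Phi> X = \<Phi> Y\<close> class_image a b by simp
    moreover have "h a \<in> B" "h b \<in> B" using h a b by blast+
    ultimately have "(h a, h b) \<in> F" using eq_equiv_class_iff[OF F] by blast
    then have "(a, b) \<in> E" using reflects a b by blast
    then show "X = Y" using eq_equiv_class_iff[OF E] a b by simp
  qed
  moreover have "\<Phi> ` (A // E) = B // F"
  proof
    show "\<Phi> ` (A // E) \<subseteq> B // F"
    proof
      fix Y assume "Y \<in> \<Phi> ` (A // E)"
      then obtain X where "X \<in> A // E" "Y = \<Phi> X" by blast
      moreover from this(1) obtain a where "a \<in> A" "X = E `` {a}" by (rule quotientE)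
      ultimately have "a \<in> A" "Y = F `` {h a}" using class_image by simp_all
      then show "Y \<in> B // F" using h by (auto intro: quotientI)
    qed
    show "B // F \<subseteq> \<Phi> ` (A // E)"
    proof
      fix Y assume "Y \<in> B // F"
      then obtain b where "b \<in> B" "Y = F `` {b}" by (rule quotientE)
      moreover obtain a where "a \<in> A" "(h a, b) \<in> F" using onto calculation(1) by blast
      ultimately have "Y = \<Phi> (E `` {a})" using class_image equiv_class_eq[OF F] by simp
      moreover have "E `` {a} \<in> A // E" using \<open>a \<in> A\<close> by (rule quotientI)
      ultimately show "Y \<in> \<Phi> ` (A // E)" by (rule image_eqI)
    qed
  qed
  ultimately have "bij_betw \<Phi> (A // E) (B // F)" unfolding bij_betw_def ..
  then show ?thesis by (rule bij_betw_same_card)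
qed

lemma ex_H0_posets_iso_add_chain:
  assumes T: "T \<in> H0_posets (Suc (Suc p)) (Suc a)" and sparse: "3 * Suc a < 2 * Suc (Suc p)"
  shows "\<exists>R\<in>H0_posets p a. poset_iso (Suc (Suc p)) (add_chain p R) T"
proof -
  let ?W = "{0..<Suc (Suc p)}"
  have po: "poset_on (Suc (Suc p)) T" and card: "card (hasse T) = Suc a"
    and cover: "no_isolated (Suc (Suc p)) T"
    using T unfolding H0_posets_def by auto
  have sub: "T \<subseteq> ?W \<times> ?W" using poset_on_subset[OF po] .
  have "\<exists>x y. isolated_arc (hasse T) x y"
  proof (rule isolated_arc_exists)
    show "hasse T \<subseteq> ?W \<times> ?W" using sub unfolding hasse_def by blast
    show "\<forall>(x, y)\<in>hasse T. x \<noteq> y" unfolding hasse_def by blast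
    show "\<forall>v\<in>?W. \<exists>e\<in>hasse T. v \<in> {fst e, snd e}"
      using cover unfolding no_isolated_def by force
    show "3 * card (hasse T) < 2 * card ?W" using card sparse by simp
  qed simp
  then obtain x y where "isolated_chain T x y"
    using isolated_chain_if_isolated_arc[OF po] by blast
  then obtain g R where g: "bij_betw g ?W ?W" and R: "R \<subseteq> {0..<p} \<times> {0..<p}"
    and gT: "T = dir_image (add_chain p R) g"
    using ex_dir_image_add_chain_if_isolated_chain[OF sub] by blast
  have "poset_iso (Suc (Suc p)) (add_chain p R) T"
    using poset_iso_iff_dir_image[OF add_chain_subset[OF R] sub] g gT by blast
  moreover have "add_chain p R = dir_image T (inv_into ?W g)"
    using dir_image_inv_into[OF bij_betw_imp_inj_on[OF g] add_chain_subset[OF R]] gT by simp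
  then have "R \<in> H0_posets p a"
    using H0_posets_dir_image[OF bij_betw_inv_into[OF g] T] add_chain_mem_H0_posets_iff[OF R] by simp
  ultimately show ?thesis by blast
qed

lemma H0_Suc_Suc:
  assumes sparse: "3 * Suc a < 2 * Suc (Suc p)"
  shows "H0 (Suc (Suc p)) (Suc a) = H0 p a"
proof -
  let ?A = "H0_posets p a" and ?B = "H0_posets (Suc (Suc p)) (Suc a)"
  have sub: "R \<subseteq> {0..<q} \<times> {0..<q}" if "R \<in> H0_posets q m" for R q m
    using that poset_on_subset unfolding H0_posets_def by blast
  have "card (?A // {(R, S). R \<in> ?A \<and> S \<in> ?A \<and> poset_iso p R S}) =
    card (?B // {(R, S). R \<in> ?B \<and> S \<in> ?B \<and> poset_iso (Suc (Suc p)) R S})"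
  proof (rule card_quotient_eqI[where h = "add_chain p"])
    show "equiv ?A {(R, S). R \<in> ?A \<and> S \<in> ?A \<and> poset_iso p R S}"
      by (rule equiv_poset_iso) (rule sub)
    show "equiv ?B {(R, S). R \<in> ?B \<and> S \<in> ?B \<and> poset_iso (Suc (Suc p)) R S}"
      by (rule equiv_poset_iso) (rule sub)
    show "add_chain p ` ?A \<subseteq> ?B"
      using add_chain_mem_H0_posets_iff[OF sub] by blast
    show "(R, S) \<in> {(R, S). R \<in> ?A \<and> S \<in> ?A \<and> poset_iso p R S} \<longleftrightarrow>
      (add_chain p R, add_chain p S) \<in> {(R, S). R \<in> ?B \<and> S \<in> ?B \<and> poset_iso (Suc (Suc p)) R S}"
      if "R \<in> ?A" "S \<in> ?A" for R S
      using that add_chain_mem_H0_posets_iff[OF sub[OF that(1)]]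
        add_chain_mem_H0_posets_iff[OF sub[OF that(2)]]
        poset_iso_add_chain[OF sub[OF that(1)] sub[OF that(2)]]
        poset_iso_add_chain_cancel[OF sub[OF that(1)] sub[OF that(2)]] by auto
    show "\<exists>R\<in>?A. (add_chain p R, T) \<in> {(R, S). R \<in> ?B \<and> S \<in> ?B \<and> poset_iso (Suc (Suc p)) R S}"
      if T: "T \<in> ?B" for T
    proof -
      obtain R where "R \<in> ?A" "poset_iso (Suc (Suc p)) (add_chain p R) T"
        using ex_H0_posets_iso_add_chain[OF T sparse] by blast
      moreover have "add_chain p R \<in> ?B"
        using add_chain_mem_H0_posets_iff[OF sub] calculation(1) by blast
      ultimately show ?thesis using T by blast
    qed
  qed
  then show ?thesis unfolding H0_def by simp
qed

theorem lemma6: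
  fixes n :: nat
  shows "\<forall>a b. 2 * n \<le> a \<longrightarrow> 2 * n \<le> b \<longrightarrow> H0 (2 * a - n) a = H0 (2 * b - n) b"
proof -
  have step: "H0 (2 * Suc a - n) (Suc a) = H0 (2 * a - n) a" if "2 * n \<le> a" for a
  proof -
    have "2 * Suc a - n = Suc (Suc (2 * a - n))" using that by simp
    then show ?thesis using H0_Suc_Suc[of a "2 * a - n"] that by simp
  qed
  have "H0 (2 * a - n) a = H0 (2 * (2 * n) - n) (2 * n)" if "2 * n \<le> a" for a
    using that
  proof (induction a rule: nat_induct_at_least)
    case (Suc a)
    then show ?case using step[OF Suc.hyps(1)] by simp
  qed simp
  then show ?thesis by simp
qed

end
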